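(* Let $g:\mathbb{R}^d\to\mathbb{R}$ be $\alpha$-strongly convex and $\beta$-smooth (twice differentiable), let $f\equiv0$, and let $\eta>0$. Let $\pi_\eta^X$ be the $X$-marginal of $\pi_\eta^{XY}\propto\exp[-g(y)-\frac1{2\eta}\|x-y\|_2^2]$ on $\mathbb{R}^d\times\mathbb{R}^d$, and $\nu\propto\exp(-g)$ (so $\pi_\eta^X=\nu*\mathcal N(0,\eta\mathbf I)$). Then $$D_{\mathrm{KL}}(\pi_\eta^X\|\nu)\le\frac{d\alpha}{2\beta}\Big[\exp\Big(\frac{2\beta^2\eta}{\alpha}\Big)-1\Big],\qquad \mathrm{TV}(\pi_\eta^X,\nu)\le\sqrt{\frac{d\alpha}{4\beta}\Big[\exp\Big(\frac{2\beta^2\eta}{\alpha}\Big)-1\Big]}.$$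
   Context: $g$ is $\beta$-smooth if $g(x)-g(y)\le\nabla g(y)^T(x-y)+\frac\beta2\|x-y\|_2^2$ for all $x,y$; $\alpha$-strongly convex if $g(x)-g(y)\ge\nabla g(y)^T(x-y)+\frac\alpha2\|x-y\|_2^2$. $D_{\mathrm{KL}}(\mu\|\nu)=\int\mu\log\frac\mu\nu$; $\mathrm{TV}(\mu,\nu)=\frac12\|\mu-\nu\|_1$. *)

theory Defs
  imports "HOL-Analysis.Analysis"
begin

definition beta_smooth :: "('a::euclidean_space \<Rightarrow> real) \<Rightarrow> ('a \<Rightarrow> 'a) \<Rightarrow> real \<Rightarrow> bool" where
  "beta_smooth g grad \<beta> \<longleftrightarrow>
     (\<forall>x y. g x - g y \<le> grad y \<bullet> (x - y) + \<beta> / 2 * (norm (x - y))\<^sup>2)"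

definition strongly_convex :: "('a::euclidean_space \<Rightarrow> real) \<Rightarrow> ('a \<Rightarrow> 'a) \<Rightarrow> real \<Rightarrow> bool" where
  "strongly_convex g grad \<alpha> \<longleftrightarrow>
     (\<forall>x y. g x - g y \<ge> grad y \<bullet> (x - y) + \<alpha> / 2 * (norm (x - y))\<^sup>2)"

definition gibbs_density :: "('a::euclidean_space \<Rightarrow> real) \<Rightarrow> 'a \<Rightarrow> real" where
  "gibbs_density g x = exp (- g x) / (LINT z|lborel. exp (- g z))"

definition joint_weight :: "('a::euclidean_space \<Rightarrow> real) \<Rightarrow> real \<Rightarrow> 'a \<Rightarrow> 'a \<Rightarrow> real" where
  "joint_weight g \<eta> x y = exp (- g y - (norm (x - y))\<^sup>2 / (2 * \<eta>))"

definition X_marginal_density :: "('a::euclidean_space \<Rightarrow> real) \<Rightarrow> real \<Rightarrow> 'a \<Rightarrow> real" where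
  "X_marginal_density g \<eta> x =
     (LINT y|lborel. joint_weight g \<eta> x y) /
     (LINT x'|lborel. (LINT y|lborel. joint_weight g \<eta> x' y))"

definition KL_dens :: "('a::euclidean_space \<Rightarrow> real) \<Rightarrow> ('a \<Rightarrow> real) \<Rightarrow> real" where
  "KL_dens p q = (LINT x|lborel. p x * ln (p x / q x))"

definition TV_dens :: "('a::euclidean_space \<Rightarrow> real) \<Rightarrow> ('a \<Rightarrow> real) \<Rightarrow> real" where
  "TV_dens p q = (1/2) * (LINT x|lborel. \<bar>p x - q x\<bar>)"

end

theory Submission
  imports Defs "HOL-Probability.Probability"
begin

text \<open>
  Let \<open>q = exp (- g) / Z\<close> and let \<open>p = q \<star> \<gamma>\<^sub>\<eta>\<close> be its Gaussian smoothing, the law of \<open>Y + W\<close>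
  with \<open>Y \<sim> q\<close> and independent \<open>W \<sim> N(0, \<eta> I)\<close>. At each \<open>x\<close>, \<open>p x / q x\<close> is the
  \<open>\<gamma>\<^sub>\<eta> (x - a) da\<close>-average of \<open>q a / q x = exp (g x - g a)\<close>, so Jensen's inequality for
  \<open>u ln u\<close> gives \<open>p x ln (p x / q x) \<le> \<integral> q a \<gamma>\<^sub>\<eta> (x - a) (g x - g a) da\<close>. Integrating in
  \<open>x\<close> (Fubini) yields \<open>KL(p \<parallel> q) \<le> E [g (Y + W) - g Y] \<le> \<beta> d \<eta> / 2\<close> by \<open>\<beta>\<close>-smoothness,
  since \<open>E W = 0\<close> and \<open>E \<parallel>W\<parallel>\<^sup>2 = d \<eta>\<close>; this is below both claimed bounds because
  \<open>x \<le> exp x - 1\<close>. The total variation bound follows from the pointwise inequality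
  \<open>(\<surd>p - \<surd>q)\<^sup>2 \<le> p ln (p / q) - p + q\<close> and AM-GM. Strong convexity only provides a
  Gaussian upper bound on \<open>exp (- g)\<close>, which makes all the integrals involved finite.
\<close>

lemma amgm_mult_le: "0 < a \<Longrightarrow> (u::real) * w \<le> u\<^sup>2 / a + a * w\<^sup>2 / 4"
  using zero_le_power2[of "u - a * w / 2"]
  by (simp add: power2_eq_square field_simps)

lemma le_one_plus_power2: "(x::real) \<le> 1 + x\<^sup>2"
  using zero_le_power2[of "x - 1"] zero_le_power2[of x]
  unfolding power2_diff by (simp only: power_one mult_1_right)

lemma power2_norm_le_diff: "(norm (b::'a::real_normed_vector))\<^sup>2 \<le> 2 * (norm (b - a))\<^sup>2 + 2 * (norm a)\<^sup>2"
proof -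
  have "norm b \<le> norm (b - a) + norm a"
    using norm_triangle_ineq[of "b - a" a] by simp
  then have "(norm b)\<^sup>2 \<le> (norm (b - a) + norm a)\<^sup>2"
    by (simp add: power_mono)
  also have "\<dots> \<le> 2 * (norm (b - a))\<^sup>2 + 2 * (norm a)\<^sup>2"
    using amgm_mult_le[of 2 "norm (b - a)" "norm a"] by (simp add: power2_sum)
  finally show ?thesis .
qed

lemma ln_tangent_bound: "0 < (u::real) \<Longrightarrow> 0 < m \<Longrightarrow> u * ln m \<le> u * ln u - u + m"
  using ln_le_minus_one[of "m / u"] mult_left_mono[of "ln (m / u)" "m / u - 1" u]
  by (simp add: ln_div algebra_simps)

lemma power2_sqrt_diff_le_mult_ln:
  fixes p q :: real
  assumes "0 < p" "0 < q"
  shows "(sqrt p - sqrt q)\<^sup>2 \<le> p * ln (p / q) - p + q"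
proof -
  let ?r = "sqrt q / sqrt p"
  have "ln ?r \<le> ?r - 1"
    using assms by (intro ln_le_minus_one) simp
  moreover have "ln ?r = - ln (p / q) / 2"
    using assms by (simp add: ln_div ln_sqrt)
  ultimately have "p * (2 - 2 * ?r) \<le> p * ln (p / q)"
    using assms by (intro mult_left_mono) auto
  moreover have "p * (2 - 2 * ?r) = 2 * p - 2 * (sqrt p * sqrt q)"
    using assms by (simp add: field_simps)
  moreover have "(sqrt p - sqrt q)\<^sup>2 = p + q - 2 * (sqrt p * sqrt q)"
    using assms by (simp add: power2_diff)
  ultimately show ?thesis
    by linarith
qed

lemma abs_diff_le_mult_ln:
  fixes p q s :: real
  assumes "0 < p" "0 < q" "0 < s"
  shows "\<bar>p - q\<bar> \<le> (p * ln (p / q) - p + q) / (2 * s) + s * (p + q)"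
proof -
  have "p - q = (sqrt p - sqrt q) * (sqrt p + sqrt q)"
    using assms by (simp add: algebra_simps)
  then have "\<bar>p - q\<bar> = \<bar>sqrt p - sqrt q\<bar> * (sqrt p + sqrt q)"
    using assms by (simp add: abs_mult)
  also have "\<dots> \<le> \<bar>sqrt p - sqrt q\<bar>\<^sup>2 / (2 * s) + (2 * s) * (sqrt p + sqrt q)\<^sup>2 / 4"
    using assms by (intro amgm_mult_le) simp
  also have "\<dots> \<le> (p * ln (p / q) - p + q) / (2 * s) + s * (p + q)"
  proof -
    have "(sqrt p + sqrt q)\<^sup>2 \<le> 2 * (p + q)"
      using zero_le_power2[of "sqrt p - sqrt q"] assms by (simp add: power2_sum power2_diff)
    then show ?thesis
      using power2_sqrt_diff_le_mult_ln[OF assms(1,2)] assms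
      by (intro add_mono divide_right_mono) auto
  qed
  finally show ?thesis .
qed

lemma integral_pos_of_pos:
  fixes f :: "'a \<Rightarrow> real"
  assumes "integrable M f" "\<And>x. x \<in> space M \<Longrightarrow> 0 < f x" "emeasure M (space M) \<noteq> 0"
  shows "0 < integral\<^sup>L M f"
proof -
  have "0 \<le> integral\<^sup>L M f"
    using assms(2) by (intro integral_nonneg_AE AE_I2) (simp add: less_imp_le)
  moreover have "integral\<^sup>L M f \<noteq> 0"
  proof
    assume "integral\<^sup>L M f = 0"
    then have "AE x in M. f x = 0"
      using integral_nonneg_eq_0_iff_AE[OF assms(1)] assms(2) by (auto intro: less_imp_le)
    moreover have "AE x in M. f x \<noteq> 0"
      using assms(2) by (intro AE_I2) (metis less_irrefl)
    ultimately have "AE x in M. False"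
      by eventually_elim simp
    then show False
      using assms(3) ae_filter_eq_bot_iff trivial_limit_def by metis
  qed
  ultimately show ?thesis by simp
qed

lemma has_bochner_integral_lborel_affine_unit:
  fixes f :: "'a::euclidean_space \<Rightarrow> 'b::{banach, second_countable_topology}"
  assumes [measurable]: "f \<in> borel_measurable borel" and c: "\<bar>c\<bar> = 1"
  shows "has_bochner_integral lborel (\<lambda>x. f (t + c *\<^sub>R x)) I \<longleftrightarrow> has_bochner_integral lborel f I"
proof -
  have "c \<noteq> 0" using c by auto
  then have D: "lborel = distr lborel borel (\<lambda>x::'a. t + c *\<^sub>R x)"
    using lborel_affine[of c t] c by (simp add: density_1)
  show ?thesis
    by (subst (2) D) (simp add: has_bochner_integral_iff integrable_distr_eq integral_distr)
qed

lemma has_bochner_integral_lborel_shift: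
  fixes f :: "'a::euclidean_space \<Rightarrow> 'b::{banach, second_countable_topology}"
  assumes "f \<in> borel_measurable borel" "has_bochner_integral lborel f I"
  shows "has_bochner_integral lborel (\<lambda>x. f (x - a)) I"
  using has_bochner_integral_lborel_affine_unit[OF assms(1), of 1 "- a" I] assms(2)
  by (simp add: algebra_simps)

lemma has_bochner_integral_lborel_reflect:
  fixes f :: "'a::euclidean_space \<Rightarrow> 'b::{banach, second_countable_topology}"
  assumes "f \<in> borel_measurable borel" "has_bochner_integral lborel f I"
  shows "has_bochner_integral lborel (\<lambda>x. f (a - x)) I"
  using has_bochner_integral_lborel_affine_unit[OF assms(1), of "-1" a I] assms(2)
  by simp

lemma jensen_mult_ln:
  fixes w u :: "'a \<Rightarrow> real"
  assumes w: "has_bochner_integral M w 1" "\<And>x. x \<in> space M \<Longrightarrow> 0 \<le> w x"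
    and u: "\<And>x. x \<in> space M \<Longrightarrow> 0 < u x"
    and wu: "has_bochner_integral M (\<lambda>x. w x * u x) m" and m: "0 < m"
    and int: "integrable M (\<lambda>x. w x * (u x * ln (u x)))"
  shows "m * ln m \<le> (\<integral>x. w x * (u x * ln (u x)) \<partial>M)"
proof -
  let ?I = "\<integral>x. w x * (u x * ln (u x)) \<partial>M"
  have rhs: "has_bochner_integral M (\<lambda>x. w x * (u x * ln (u x)) - w x * u x + m * w x) (?I - m + m * 1)"
    using int wu w(1)
    by (intro has_bochner_integral_add has_bochner_integral_diff has_bochner_integral_mult_right)
      (auto intro: has_bochner_integral_integrable)
  have "m * ln m = (\<integral>x. w x * u x * ln m \<partial>M)"
    using has_bochner_integral_mult_left[OF wu] by (rule has_bochner_integral_integral_eq[symmetric])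
  also have "\<dots> \<le> (\<integral>x. w x * (u x * ln (u x)) - w x * u x + m * w x \<partial>M)"
  proof (rule integral_mono)
    show "integrable M (\<lambda>x. w x * u x * ln m)"
      using wu by (auto intro: integrable.intros)
    show "integrable M (\<lambda>x. w x * (u x * ln (u x)) - w x * u x + m * w x)"
      using rhs by (rule integrable.intros)
    fix x assume "x \<in> space M"
    then show "w x * u x * ln m \<le> w x * (u x * ln (u x)) - w x * u x + m * w x"
      using mult_left_mono[OF ln_tangent_bound[OF u m] w(2)] by (simp add: algebra_simps)
  qed
  also have "\<dots> = ?I"
    using has_bochner_integral_integral_eq[OF rhs] by simp
  finally show ?thesis .
qed

lemma TV_dens_le_sqrt_KL_dens:
  fixes p q :: "'a::euclidean_space \<Rightarrow> real"
  assumes p: "has_bochner_integral lborel p 1" "\<And>x. 0 < p x"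
    and q: "has_bochner_integral lborel q 1" "\<And>x. 0 < q x"
    and kl: "integrable lborel (\<lambda>x. p x * ln (p x / q x))"
  shows "TV_dens p q \<le> sqrt (KL_dens p q)"
proof -
  let ?kl = "\<lambda>x. p x * ln (p x / q x)"
  let ?K = "KL_dens p q"
  have kl': "has_bochner_integral lborel ?kl ?K"
    using kl unfolding KL_dens_def by (rule has_bochner_integral_integrable)
  have "p x - q x \<le> ?kl x" for x
    using power2_sqrt_diff_le_mult_ln[OF p(2) q(2), of x x] zero_le_power2[of "sqrt (p x) - sqrt (q x)"]
    by linarith
  then have "(\<integral>x. p x - q x \<partial>lborel) \<le> ?K"
    unfolding KL_dens_def using p(1) q(1) kl
    by (intro integral_mono) (auto intro: integrable.intros)
  then have K: "0 \<le> ?K"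
    using has_bochner_integral_integral_eq[OF has_bochner_integral_diff[OF p(1) q(1)]] by simp
  have bound: "(\<integral>x. \<bar>p x - q x\<bar> \<partial>lborel) \<le> ?K / (2 * s) + 2 * s" if "0 < s" for s
  proof -
    have hb: "has_bochner_integral lborel (\<lambda>x. (?kl x - p x + q x) / (2 * s) + s * (p x + q x))
        ((?K - 1 + 1) / (2 * s) + s * (1 + 1))"
      using kl' p(1) q(1) by (intro has_bochner_integral_add has_bochner_integral_diff
          has_bochner_integral_divide_zero has_bochner_integral_mult_right)
    have "(\<integral>x. \<bar>p x - q x\<bar> \<partial>lborel) \<le> (\<integral>x. (?kl x - p x + q x) / (2 * s) + s * (p x + q x) \<partial>lborel)"
    proof (rule integral_mono)
      show "integrable lborel (\<lambda>x. \<bar>p x - q x\<bar>)"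
        using p(1) q(1) by (intro integrable_abs Bochner_Integration.integrable_diff integrable.intros)
    qed (use hb abs_diff_le_mult_ln[OF p(2) q(2) that] in \<open>auto intro: integrable.intros\<close>)
    also have "\<dots> = ?K / (2 * s) + 2 * s"
      using has_bochner_integral_integral_eq[OF hb] by simp
    finally show ?thesis .
  qed
  have "(\<integral>x. \<bar>p x - q x\<bar> \<partial>lborel) \<le> 2 * sqrt ?K"
  proof (cases "?K = 0")
    case True
    show ?thesis
    proof (rule field_le_epsilon)
      fix e :: real assume "0 < e"
      then show "(\<integral>x. \<bar>p x - q x\<bar> \<partial>lborel) \<le> 2 * sqrt ?K + e"
        using bound[of "e / 2"] True by simp
    qed
  next
    case False
    then have "0 < sqrt ?K" using K by simp
    then show ?thesis
      using bound[of "sqrt ?K / 2"] K by (simp add: real_div_sqrt)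
  qed
  then show ?thesis
    unfolding TV_dens_def by simp
qed

section \<open>Isotropic Gaussian densities\<close>

lemma power2_norm_eq_sum_Basis: "(norm (z::'a::euclidean_space))\<^sup>2 = (\<Sum>b\<in>Basis. (z \<bullet> b)\<^sup>2)"
  unfolding power2_norm_eq_inner euclidean_inner[of z z] by (simp add: power2_eq_square)

definition isotropic_normal_density :: "real \<Rightarrow> 'a::euclidean_space \<Rightarrow> real" where
  "isotropic_normal_density t z = (\<Prod>b\<in>Basis. normal_density 0 (sqrt t) (z \<bullet> b))"

lemma isotropic_normal_density_nonneg: "0 \<le> isotropic_normal_density t z"
  by (simp add: isotropic_normal_density_def prod_nonneg)

lemma isotropic_normal_density_pos: "0 < t \<Longrightarrow> 0 < isotropic_normal_density t z"
  by (simp add: isotropic_normal_density_def prod_pos normal_density_pos)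

lemma borel_measurable_isotropic_normal_density[measurable]:
  "isotropic_normal_density t \<in> borel_measurable borel"
  unfolding isotropic_normal_density_def by measurable

lemma isotropic_normal_density_minus: "isotropic_normal_density t (- z) = isotropic_normal_density t z"
  by (simp add: isotropic_normal_density_def normal_density_def)

lemma isotropic_normal_density_eq:
  assumes "0 < t"
  shows "isotropic_normal_density t (z::'a::euclidean_space) =
           exp (- (norm z)\<^sup>2 / (2 * t)) / sqrt (2 * pi * t) ^ DIM('a)"
proof -
  have "isotropic_normal_density t z = (\<Prod>b\<in>Basis. exp (- (z \<bullet> b)\<^sup>2 / (2 * t))) / sqrt (2 * pi * t) ^ DIM('a)"
    using assms by (simp add: isotropic_normal_density_def normal_density_def prod_dividef)
  also have "(\<Prod>b\<in>Basis. exp (- (z \<bullet> b)\<^sup>2 / (2 * t))) = exp (- (norm z)\<^sup>2 / (2 * t))"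
    by (simp add: exp_sum power2_norm_eq_sum_Basis sum_divide_distrib flip: sum_negf)
  finally show ?thesis .
qed

lemma isotropic_normal_density_le:
  "0 < t \<Longrightarrow> isotropic_normal_density t (z::'a::euclidean_space) \<le> 1 / sqrt (2 * pi * t) ^ DIM('a)"
  by (simp add: isotropic_normal_density_eq divide_right_mono)

lemma nn_integral_isotropic_normal_density:
  assumes "0 < t"
  shows "(\<integral>\<^sup>+z. ennreal (isotropic_normal_density t (z::'a::euclidean_space)) \<partial>lborel) = 1"
proof -
  have "(\<integral>\<^sup>+z. ennreal (isotropic_normal_density t (z::'a)) \<partial>lborel)
      = (\<integral>\<^sup>+(z::'a). (\<Prod>b\<in>Basis. ennreal (normal_density 0 (sqrt t) (z \<bullet> b))) \<partial>lborel)"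
    by (simp add: isotropic_normal_density_def prod_ennreal prod_nonneg)
  also have "\<dots> = (\<Prod>b\<in>(Basis::'a set). \<integral>\<^sup>+x. ennreal (normal_density 0 (sqrt t) x) \<partial>lborel)"
    by (rule nn_integral_lborel_prod) auto
  finally show ?thesis
    using assms by (simp add: nn_integral_eq_integral)
qed

lemma nn_integral_isotropic_normal_density_coordinate_sq:
  assumes "0 < t" and "c \<in> Basis"
  shows "(\<integral>\<^sup>+z. ennreal (isotropic_normal_density t (z::'a::euclidean_space) * (z \<bullet> c)\<^sup>2) \<partial>lborel) = t"
proof -
  let ?n = "\<lambda>x. normal_density 0 (sqrt t) x"
  have one: "(\<integral>\<^sup>+x. ennreal (?n x) \<partial>lborel) = 1"
    using assms by (subst nn_integral_eq_integral) auto
  have "integrable lborel (\<lambda>x. ?n x * x\<^sup>2)" "(\<integral>x. ?n x * x\<^sup>2 \<partial>lborel) = t"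
    using integrable_normal_moment[of "sqrt t" 0 2] integral_normal_moment_even[of "sqrt t" 0 1] assms
    by (simp_all add: power2_eq_square)
  then have var: "(\<integral>\<^sup>+x. ennreal (?n x * x\<^sup>2) \<partial>lborel) = t"
    by (subst nn_integral_eq_integral) auto
  define f where "f b x = ennreal (if b = c then ?n x * x\<^sup>2 else ?n x)" for b x
  have "(\<integral>\<^sup>+z. ennreal (isotropic_normal_density t (z::'a) * (z \<bullet> c)\<^sup>2) \<partial>lborel)
      = (\<integral>\<^sup>+(z::'a). (\<Prod>b\<in>Basis. f b (z \<bullet> b)) \<partial>lborel)"
    using assms(2) by (intro nn_integral_cong)
      (simp add: f_def isotropic_normal_density_def prod.remove prod_ennreal prod_nonneg
        ennreal_mult[symmetric] mult_ac)
  also have "\<dots> = (\<Prod>b\<in>(Basis::'a set). \<integral>\<^sup>+x. f b x \<partial>lborel)"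
    by (rule nn_integral_lborel_prod) (auto simp: f_def)
  also have "\<dots> = t"
    using assms(2) by (simp add: prod.remove f_def one var)
  finally show ?thesis .
qed

lemma has_bochner_integral_isotropic_normal_density:
  assumes "0 < t"
  shows "has_bochner_integral lborel (isotropic_normal_density t :: 'a::euclidean_space \<Rightarrow> real) 1"
  using nn_integral_isotropic_normal_density[OF assms]
  by (intro has_bochner_integral_nn_integral) (auto simp: isotropic_normal_density_nonneg)

lemma has_bochner_integral_isotropic_normal_density_norm_sq:
  assumes "0 < t"
  shows "has_bochner_integral lborel
           (\<lambda>z::'a::euclidean_space. isotropic_normal_density t z * (norm z)\<^sup>2) (real DIM('a) * t)"
proof (rule has_bochner_integral_nn_integral)
  have "(\<integral>\<^sup>+z. ennreal (isotropic_normal_density t (z::'a) * (norm z)\<^sup>2) \<partial>lborel)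
      = (\<integral>\<^sup>+(z::'a). (\<Sum>b\<in>Basis. ennreal (isotropic_normal_density t z * (z \<bullet> b)\<^sup>2)) \<partial>lborel)"
    by (intro nn_integral_cong)
      (simp add: power2_norm_eq_sum_Basis sum_distrib_left isotropic_normal_density_nonneg)
  also have "\<dots> = (\<Sum>b\<in>(Basis::'a set). \<integral>\<^sup>+z. ennreal (isotropic_normal_density t z * (z \<bullet> b)\<^sup>2) \<partial>lborel)"
    by (rule nn_integral_sum) measurable
  also have "\<dots> = ennreal (real DIM('a) * t)"
    using assms by (simp add: nn_integral_isotropic_normal_density_coordinate_sq ennreal_of_nat_eq_real_of_nat
        ennreal_mult')
  finally show "(\<integral>\<^sup>+z. ennreal (isotropic_normal_density t (z::'a) * (norm z)\<^sup>2) \<partial>lborel)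
      = ennreal (real DIM('a) * t)" .
qed (use assms in \<open>auto simp: isotropic_normal_density_nonneg\<close>)

lemma has_bochner_integral_isotropic_normal_density_inner:
  assumes "0 < t"
  shows "has_bochner_integral lborel (\<lambda>z::'a::euclidean_space. isotropic_normal_density t z * (v \<bullet> z)) 0"
proof -
  let ?\<gamma> = "isotropic_normal_density t :: 'a \<Rightarrow> real"
  let ?f = "\<lambda>z. ?\<gamma> z * (v \<bullet> z)"
  have int: "integrable lborel ?f"
  proof (rule Bochner_Integration.integrable_bound)
    show "integrable lborel (\<lambda>z. norm v * (?\<gamma> z + ?\<gamma> z * (norm z)\<^sup>2))"
      using integrable.intros[OF has_bochner_integral_isotropic_normal_density[OF assms]]
        integrable.intros[OF has_bochner_integral_isotropic_normal_density_norm_sq[OF assms]]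
      by (intro integrable_mult_right Bochner_Integration.integrable_add)
    show "AE z in lborel. norm (?f z) \<le> norm (norm v * (?\<gamma> z + ?\<gamma> z * (norm z)\<^sup>2))"
    proof (intro AE_I2)
      fix z :: 'a
      have "\<bar>v \<bullet> z\<bar> \<le> norm v * norm z"
        by (rule Cauchy_Schwarz_ineq2)
      also have "\<dots> \<le> norm v * (1 + (norm z)\<^sup>2)"
        by (intro mult_left_mono le_one_plus_power2) simp
      finally show "norm (?f z) \<le> norm (norm v * (?\<gamma> z + ?\<gamma> z * (norm z)\<^sup>2))"
        using isotropic_normal_density_nonneg[of t z] mult_left_mono
        by (fastforce simp: abs_mult algebra_simps)
    qed
  qed simp
  have "integral\<^sup>L lborel ?f = integral\<^sup>L lborel (\<lambda>z. ?f (0 - z))"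
    using has_bochner_integral_lborel_reflect[of ?f "integral\<^sup>L lborel ?f" 0] int
    by (simp add: has_bochner_integral_iff)
  also have "\<dots> = - integral\<^sup>L lborel ?f"
    by (simp add: isotropic_normal_density_minus)
  finally show ?thesis
    using int by (simp add: has_bochner_integral_iff)
qed

lemma has_bochner_integral_isotropic_normal_density_shift_quadratic:
  fixes a v :: "'a::euclidean_space"
  assumes "0 < t"
  shows "has_bochner_integral lborel
           (\<lambda>x. isotropic_normal_density t (x - a) * (A + v \<bullet> (x - a) + B * (norm (x - a))\<^sup>2))
           (A + B * (real DIM('a) * t))"
proof -
  let ?\<gamma> = "isotropic_normal_density t :: 'a \<Rightarrow> real"
  have "has_bochner_integral lborel (\<lambda>z. A * ?\<gamma> z + ?\<gamma> z * (v \<bullet> z) + B * (?\<gamma> z * (norm z)\<^sup>2))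
          (A * 1 + 0 + B * (real DIM('a) * t))"
    using has_bochner_integral_isotropic_normal_density[OF assms]
      has_bochner_integral_isotropic_normal_density_inner[OF assms]
      has_bochner_integral_isotropic_normal_density_norm_sq[OF assms]
    by (intro has_bochner_integral_add has_bochner_integral_mult_right)
  then have "has_bochner_integral lborel (\<lambda>z. ?\<gamma> z * (A + v \<bullet> z + B * (norm z)\<^sup>2))
               (A + B * (real DIM('a) * t))"
    by (simp add: algebra_simps)
  then show ?thesis
    by (rule has_bochner_integral_lborel_shift[rotated]) simp
qed

lemma has_bochner_integral_isotropic_normal_density_shift_radial_quadratic:
  fixes a :: "'a::euclidean_space"
  assumes "0 < t"
  shows "has_bochner_integral lborel
           (\<lambda>x. isotropic_normal_density t (x - a) * (A + B * (norm (x - a))\<^sup>2)) (A + B * (real DIM('a) * t))"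
  using has_bochner_integral_isotropic_normal_density_shift_quadratic[OF assms, of a A 0 B] by simp

lemma has_bochner_integral_isotropic_normal_density_reflect:
  "0 < t \<Longrightarrow> has_bochner_integral lborel (\<lambda>y. isotropic_normal_density t (x - y)) (1::real)"
  by (intro has_bochner_integral_lborel_reflect has_bochner_integral_isotropic_normal_density) simp_all

lemma integral_isotropic_normal_density_shift:
  "0 < t \<Longrightarrow> (\<integral>x. isotropic_normal_density t (x - y) \<partial>lborel) = 1"
  using has_bochner_integral_lborel_shift[OF _ has_bochner_integral_isotropic_normal_density, where a = y]
  by (simp add: has_bochner_integral_integral_eq)

section \<open>Gaussian smoothing\<close>

definition gaussian_smoothing :: "('a::euclidean_space \<Rightarrow> real) \<Rightarrow> real \<Rightarrow> 'a \<Rightarrow> real" where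
  "gaussian_smoothing q t x = (\<integral>y. q y * isotropic_normal_density t (x - y) \<partial>lborel)"

context
  fixes q :: "'a::euclidean_space \<Rightarrow> real" and t :: real
  assumes q: "has_bochner_integral lborel q 1" "\<And>x. 0 < q x" and t: "0 < t"
begin

private lemma borel_measurable_q: "q \<in> borel_measurable borel"
  using borel_measurable_integrable[OF integrable.intros[OF q(1)]] by simp

lemma integrable_gaussian_smoothing_integrand:
  "integrable lborel (\<lambda>y. q y * isotropic_normal_density t (x - y))"
proof (rule Bochner_Integration.integrable_bound)
  show "integrable lborel (\<lambda>y. q y * (1 / sqrt (2 * pi * t) ^ DIM('a)))"
    using q(1) by (auto intro: integrable.intros)
  show "AE y in lborel. norm (q y * isotropic_normal_density t (x - y))
      \<le> norm (q y * (1 / sqrt (2 * pi * t) ^ DIM('a)))"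
  proof (intro AE_I2)
    fix y
    show "norm (q y * isotropic_normal_density t (x - y)) \<le> norm (q y * (1 / sqrt (2 * pi * t) ^ DIM('a)))"
      using mult_left_mono[OF isotropic_normal_density_le[OF t, of "x - y"] less_imp_le[OF q(2)[of y]]]
        isotropic_normal_density_nonneg[of t "x - y"] q(2)[of y] t
      by (simp add: abs_mult)
  qed
  note borel_measurable_q[measurable]
  show "(\<lambda>y. q y * isotropic_normal_density t (x - y)) \<in> borel_measurable lborel"
    by measurable
qed

lemma gaussian_smoothing_pos: "0 < gaussian_smoothing q t x"
  unfolding gaussian_smoothing_def using integrable_gaussian_smoothing_integrand q(2)
  by (intro integral_pos_of_pos mult_pos_pos isotropic_normal_density_pos t) auto

lemma integrable_gaussian_smoothing_pair:
  "integrable (lborel \<Otimes>\<^sub>M lborel) (\<lambda>(y, x). q y * isotropic_normal_density t (x - y))"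
proof (rule lborel_pair.Fubini_integrable)
  have "(\<integral>x. norm (q y * isotropic_normal_density t (x - y)) \<partial>lborel) = q y" for y
    using q(2)[of y] by (simp add: abs_mult isotropic_normal_density_nonneg integral_isotropic_normal_density_shift[OF t])
  then show "integrable lborel (\<lambda>y. \<integral>x. norm ((\<lambda>(y, x). q y * isotropic_normal_density t (x - y)) (y, x)) \<partial>lborel)"
    using q(1) by (auto intro: integrable.intros)
  show "AE y in lborel. integrable lborel (\<lambda>x. (\<lambda>(y, x). q y * isotropic_normal_density t (x - y)) (y, x))"
    using has_bochner_integral_lborel_shift[OF _ has_bochner_integral_isotropic_normal_density[OF t]]
    by (intro AE_I2) (auto intro: integrable.intros)
  note borel_measurable_q[measurable]
  show "(\<lambda>(y, x). q y * isotropic_normal_density t (x - y)) \<in> borel_measurable (lborel \<Otimes>\<^sub>M lborel)"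
    by measurable
qed

lemma has_bochner_integral_gaussian_smoothing:
  "has_bochner_integral lborel (gaussian_smoothing q t) 1"
proof -
  let ?f = "\<lambda>y x. q y * isotropic_normal_density t (x - y)"
  have "integrable lborel (gaussian_smoothing q t)"
    unfolding gaussian_smoothing_def[abs_def]
    by (rule lborel_pair.integrable_snd[where f = ?f]) (use integrable_gaussian_smoothing_pair in simp)
  moreover have "integral\<^sup>L lborel (gaussian_smoothing q t) = (\<integral>y. \<integral>x. ?f y x \<partial>lborel \<partial>lborel)"
    unfolding gaussian_smoothing_def[abs_def]
    using lborel_pair.integral_snd[where f = ?f] lborel_pair.integral_fst[where f = ?f]
      integrable_gaussian_smoothing_pair by simp
  ultimately show ?thesis
    using q(1) by (simp add: has_bochner_integral_iff integral_isotropic_normal_density_shift[OF t])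
qed

lemma gaussian_smoothing_mult_ln_le:
  assumes "integrable lborel (\<lambda>a. q a * isotropic_normal_density t (x - a) * ln (q a / q x))"
  shows "gaussian_smoothing q t x * ln (gaussian_smoothing q t x / q x)
           \<le> (\<integral>a. q a * isotropic_normal_density t (x - a) * ln (q a / q x) \<partial>lborel)"
proof -
  let ?p = "gaussian_smoothing q t x"
  let ?w = "\<lambda>a. isotropic_normal_density t (x - a)" and ?u = "\<lambda>a. q a / q x"
  have eq: "?w a * (?u a * ln (?u a)) = q a * ?w a * ln (q a / q x) / q x" for a
    by simp
  have "?p / q x * ln (?p / q x) \<le> (\<integral>a. ?w a * (?u a * ln (?u a)) \<partial>lborel)"
  proof (rule jensen_mult_ln)
    show "has_bochner_integral lborel ?w 1"
      by (rule has_bochner_integral_isotropic_normal_density_reflect[OF t])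
    show "has_bochner_integral lborel (\<lambda>a. ?w a * ?u a) (?p / q x)"
      using has_bochner_integral_divide_zero[OF has_bochner_integral_integrable[OF
          integrable_gaussian_smoothing_integrand[of x]], of "q x"]
      unfolding gaussian_smoothing_def by (simp add: mult.commute)
    show "integrable lborel (\<lambda>a. ?w a * (?u a * ln (?u a)))"
      unfolding eq using assms by simp
  qed (use q(2) gaussian_smoothing_pos isotropic_normal_density_nonneg in auto)
  also have "\<dots> = (\<integral>a. q a * ?w a * ln (q a / q x) \<partial>lborel) / q x"
    unfolding eq by simp
  finally show ?thesis
    using q(2)[of x] by (simp add: field_simps)
qed

end

section \<open>Strongly convex and smooth potentials\<close>

lemma borel_measurable_GDERIV:
  assumes "\<And>x. GDERIV g x :> grad x"
  shows "g \<in> borel_measurable borel"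
  using assms unfolding gderiv_def
  by (intro borel_measurable_continuous_onI continuous_at_imp_continuous_on ballI)
    (metis has_derivative_continuous)

lemma strongly_convex_ge_quadratic:
  fixes g :: "'a::euclidean_space \<Rightarrow> real"
  assumes "strongly_convex g grad \<alpha>" "0 < \<alpha>"
  shows "g 0 - (norm (grad 0))\<^sup>2 / \<alpha> + \<alpha> / 4 * (norm y)\<^sup>2 \<le> g y"
proof -
  have "grad 0 \<bullet> y + \<alpha> / 2 * (norm y)\<^sup>2 \<le> g y - g 0"
    using assms(1) unfolding strongly_convex_def by (metis diff_zero)
  moreover have "- (grad 0 \<bullet> y) \<le> (norm (grad 0))\<^sup>2 / \<alpha> + \<alpha> * (norm y)\<^sup>2 / 4"
    using Cauchy_Schwarz_ineq2[of "grad 0" y] amgm_mult_le[OF assms(2), of "norm (grad 0)" "norm y"]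
    by linarith
  ultimately show ?thesis
    by (simp add: field_simps)
qed

lemma beta_smooth_le_quadratic:
  fixes g :: "'a::euclidean_space \<Rightarrow> real"
  assumes "beta_smooth g grad \<beta>"
  shows "g y \<le> g 0 + (norm (grad 0))\<^sup>2 + (\<beta> / 2 + 1 / 4) * (norm y)\<^sup>2"
proof -
  have "g y - g 0 \<le> grad 0 \<bullet> y + \<beta> / 2 * (norm y)\<^sup>2"
    using assms unfolding beta_smooth_def by (metis diff_zero)
  moreover have "grad 0 \<bullet> y \<le> (norm (grad 0))\<^sup>2 + (norm y)\<^sup>2 / 4"
    using Cauchy_Schwarz_ineq2[of "grad 0" y] amgm_mult_le[of 1 "norm (grad 0)" "norm y"]
    by simp
  ultimately show ?thesis
    by (simp add: field_simps)
qed

lemma strongly_convex_le_beta_smooth: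
  fixes g :: "'a::euclidean_space \<Rightarrow> real"
  assumes "strongly_convex g grad \<alpha>" "beta_smooth g grad \<beta>"
  shows "\<alpha> \<le> \<beta>"
proof -
  obtain b :: 'a where "b \<in> Basis"
    using nonempty_Basis by blast
  then have "norm b = 1" by simp
  moreover have "grad 0 \<bullet> b + \<alpha> / 2 * (norm b)\<^sup>2 \<le> g b - g 0" "g b - g 0 \<le> grad 0 \<bullet> b + \<beta> / 2 * (norm b)\<^sup>2"
    using assms unfolding strongly_convex_def beta_smooth_def by (metis diff_zero)+
  ultimately show ?thesis
    by simp
qed

lemma strongly_convex_beta_smooth_abs_le_quadratic:
  fixes g :: "'a::euclidean_space \<Rightarrow> real"
  assumes "strongly_convex g grad \<alpha>" "beta_smooth g grad \<beta>" "0 < \<alpha>"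
  obtains c0 c1 where "0 \<le> c0" "0 \<le> c1" "\<And>y. \<bar>g y\<bar> \<le> c0 + c1 * (norm y)\<^sup>2"
proof
  fix y :: 'a
  let ?c0 = "\<bar>g 0\<bar> + (norm (grad 0))\<^sup>2 / \<alpha> + (norm (grad 0))\<^sup>2"
  have "0 \<le> \<alpha> / 4 * (norm y)\<^sup>2" "0 \<le> \<bar>\<beta>\<bar> / 2 * (norm y)\<^sup>2" "0 \<le> (norm (grad 0))\<^sup>2 / \<alpha>"
    using assms(3) by simp_all
  moreover have "\<beta> / 2 * (norm y)\<^sup>2 \<le> \<bar>\<beta>\<bar> / 2 * (norm y)\<^sup>2"
    by (intro mult_right_mono) auto
  ultimately show "\<bar>g y\<bar> \<le> ?c0 + (\<bar>\<beta>\<bar> / 2 + 1 / 4) * (norm y)\<^sup>2"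
    using strongly_convex_ge_quadratic[OF assms(1,3), of y] beta_smooth_le_quadratic[OF assms(2), of y]
      abs_ge_self[of "g 0"] abs_ge_minus_self[of "g 0"] zero_le_power2[of "norm y"] zero_le_power2[of "norm (grad 0)"]
    unfolding distrib_right abs_le_iff by (intro conjI) linarith+
qed (use \<open>0 < \<alpha>\<close> in simp_all)

lemma strongly_convex_exp_le_isotropic_normal_density:
  fixes g :: "'a::euclidean_space \<Rightarrow> real"
  assumes "strongly_convex g grad \<alpha>" "0 < \<alpha>"
  obtains C where "\<And>y. exp (- g y) \<le> C * isotropic_normal_density (2 / \<alpha>) y"
proof
  fix y :: 'a
  let ?S = "sqrt (2 * pi * (2 / \<alpha>)) ^ DIM('a)"
  have "- g y \<le> (- g 0 + (norm (grad 0))\<^sup>2 / \<alpha>) + - (norm y)\<^sup>2 / (2 * (2 / \<alpha>))"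
    using strongly_convex_ge_quadratic[OF assms, of y] assms(2) by (simp add: field_simps)
  then have "exp (- g y) \<le> exp (- g 0 + (norm (grad 0))\<^sup>2 / \<alpha>) * exp (- (norm y)\<^sup>2 / (2 * (2 / \<alpha>)))"
    by (simp flip: exp_add)
  also have "\<dots> = (exp (- g 0 + (norm (grad 0))\<^sup>2 / \<alpha>) * ?S) * isotropic_normal_density (2 / \<alpha>) y"
    using assms(2) by (simp add: isotropic_normal_density_eq)
  finally show "exp (- g y) \<le> (exp (- g 0 + (norm (grad 0))\<^sup>2 / \<alpha>) * ?S) * isotropic_normal_density (2 / \<alpha>) y" .
qed

lemma borel_measurable_gibbs_density[measurable]:
  "g \<in> borel_measurable borel \<Longrightarrow> gibbs_density g \<in> borel_measurable borel"
  unfolding gibbs_density_def[abs_def] by (intro borel_measurable_divide borel_measurable_const) measurable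

context
  fixes g :: "'a::euclidean_space \<Rightarrow> real" and grad :: "'a \<Rightarrow> 'a" and \<alpha> :: real
  assumes grad: "\<And>x. GDERIV g x :> grad x"
    and sc: "strongly_convex g grad \<alpha>" and alpha: "0 < \<alpha>"
begin

declare borel_measurable_GDERIV[OF grad, measurable]

lemma integrable_exp_uminus_mult_quadratic:
  "integrable lborel (\<lambda>y. exp (- g y) * (A + B * (norm y)\<^sup>2))"
proof -
  obtain C where C: "\<And>y. exp (- g y) \<le> C * isotropic_normal_density (2 / \<alpha>) y"
    using strongly_convex_exp_le_isotropic_normal_density[OF sc alpha] by blast
  let ?\<gamma> = "isotropic_normal_density (2 / \<alpha>) :: 'a \<Rightarrow> real"
  show ?thesis
  proof (rule Bochner_Integration.integrable_bound)
    show "integrable lborel (\<lambda>y. C * (\<bar>A\<bar> * ?\<gamma> y + \<bar>B\<bar> * (?\<gamma> y * (norm y)\<^sup>2)))"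
      using integrable.intros[OF has_bochner_integral_isotropic_normal_density[of "2 / \<alpha>"]]
        integrable.intros[OF has_bochner_integral_isotropic_normal_density_norm_sq[of "2 / \<alpha>"]] alpha
      by (intro integrable_mult_right Bochner_Integration.integrable_add) auto
    show "AE y in lborel. norm (exp (- g y) * (A + B * (norm y)\<^sup>2))
        \<le> norm (C * (\<bar>A\<bar> * ?\<gamma> y + \<bar>B\<bar> * (?\<gamma> y * (norm y)\<^sup>2)))"
    proof (intro AE_I2)
      fix y :: 'a
      have "\<bar>A + B * (norm y)\<^sup>2\<bar> \<le> \<bar>A\<bar> + \<bar>B\<bar> * (norm y)\<^sup>2"
        by (metis abs_mult abs_triangle_ineq abs_of_nonneg zero_le_power2)
      then have "norm (exp (- g y) * (A + B * (norm y)\<^sup>2)) \<le> (C * ?\<gamma> y) * (\<bar>A\<bar> + \<bar>B\<bar> * (norm y)\<^sup>2)"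
        using C[of y] order_trans[OF exp_ge_zero C[of y]] by (simp add: abs_mult mult_mono)
      also have "\<dots> = C * (\<bar>A\<bar> * ?\<gamma> y + \<bar>B\<bar> * (?\<gamma> y * (norm y)\<^sup>2))"
        by (simp add: algebra_simps)
      finally show "norm (exp (- g y) * (A + B * (norm y)\<^sup>2))
          \<le> norm (C * (\<bar>A\<bar> * ?\<gamma> y + \<bar>B\<bar> * (?\<gamma> y * (norm y)\<^sup>2)))"
        by simp
    qed
  qed simp
qed

lemma gibbs_partition_function_pos: "0 < (\<integral>z. exp (- g z) \<partial>lborel)"
  using integrable_exp_uminus_mult_quadratic[of 1 0] by (intro integral_pos_of_pos) auto

lemma gibbs_density_pos: "0 < gibbs_density g y"
  using gibbs_partition_function_pos by (simp add: gibbs_density_def)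

lemma integrable_gibbs_density_mult_quadratic:
  "integrable lborel (\<lambda>y. gibbs_density g y * (A + B * (norm y)\<^sup>2))"
  using integrable_divide[OF integrable_exp_uminus_mult_quadratic[of A B]]
  by (simp add: gibbs_density_def)

lemma has_bochner_integral_gibbs_density: "has_bochner_integral lborel (gibbs_density g) 1"
  using integrable_gibbs_density_mult_quadratic[of 1 0] gibbs_partition_function_pos
  by (simp add: has_bochner_integral_iff gibbs_density_def[abs_def])

lemma ln_gibbs_density_ratio: "ln (gibbs_density g a / gibbs_density g x) = g x - g a"
  using gibbs_partition_function_pos by (simp add: gibbs_density_def ln_div)

lemma X_marginal_density_eq_gaussian_smoothing:
  assumes eta: "0 < \<eta>"
  shows "X_marginal_density g \<eta> = gaussian_smoothing (gibbs_density g) \<eta>"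
proof
  fix x
  let ?Z = "\<integral>z. exp (- g z) \<partial>lborel"
  define c where "c = ?Z * sqrt (2 * pi * \<eta>) ^ DIM('a)"
  have c: "0 < c"
    unfolding c_def using gibbs_partition_function_pos eta by simp
  have "joint_weight g \<eta> x' y = c * (gibbs_density g y * isotropic_normal_density \<eta> (x' - y))" for x' y
  proof -
    have "joint_weight g \<eta> x' y = exp (- g y) * exp (- (norm (x' - y))\<^sup>2 / (2 * \<eta>))"
      unfolding joint_weight_def by (simp flip: exp_add)
    also have "\<dots> = c * (gibbs_density g y * isotropic_normal_density \<eta> (x' - y))"
      using gibbs_partition_function_pos eta
      by (simp add: c_def gibbs_density_def isotropic_normal_density_eq)
    finally show ?thesis .
  qed
  then have "(\<integral>y. joint_weight g \<eta> x' y \<partial>lborel) = c * gaussian_smoothing (gibbs_density g) \<eta> x'" for x'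
    by (simp add: gaussian_smoothing_def)
  then show "X_marginal_density g \<eta> x = gaussian_smoothing (gibbs_density g) \<eta> x"
    using c has_bochner_integral_integral_eq[OF has_bochner_integral_gaussian_smoothing[OF
        has_bochner_integral_gibbs_density gibbs_density_pos eta]]
    by (simp add: X_marginal_density_def)
qed

end

section \<open>Smoothing a Gibbs density\<close>

text \<open>The joint density \<open>\<pi>\<^sub>\<eta>\<^sup>X\<^sup>Y\<close> of \<open>(Y, X)\<close> at \<open>(a, b)\<close>, weighted by \<open>g b - g a\<close>.\<close>

definition energy_increment :: "('a::euclidean_space \<Rightarrow> real) \<Rightarrow> real \<Rightarrow> 'a \<Rightarrow> 'a \<Rightarrow> real" where
  "energy_increment g \<eta> a b = gibbs_density g a * isotropic_normal_density \<eta> (b - a) * (g b - g a)"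

context
  fixes g :: "'a::euclidean_space \<Rightarrow> real" and grad :: "'a \<Rightarrow> 'a" and \<alpha> \<beta> \<eta> :: real
  assumes grad: "\<And>x. GDERIV g x :> grad x"
    and sc: "strongly_convex g grad \<alpha>" and alpha: "0 < \<alpha>"
    and sm: "beta_smooth g grad \<beta>" and eta: "0 < \<eta>"
begin

declare borel_measurable_GDERIV[OF grad, measurable]

lemma abs_energy_increment_le:
  obtains c0 c1 where "0 \<le> c0" "0 \<le> c1" "\<And>a b. \<bar>energy_increment g \<eta> a b\<bar>
    \<le> gibbs_density g a * isotropic_normal_density \<eta> (b - a) * (c0 + c1 * (norm a)\<^sup>2 + c1 * (norm (b - a))\<^sup>2)"
proof -
  obtain c0 c1 where c0: "0 \<le> c0" and c1: "0 \<le> c1" and c: "\<And>y. \<bar>g y\<bar> \<le> c0 + c1 * (norm y)\<^sup>2"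
    using strongly_convex_beta_smooth_abs_le_quadratic[OF sc sm alpha] by metis
  have bound: "\<bar>g b - g a\<bar> \<le> 2 * c0 + 3 * c1 * (norm a)\<^sup>2 + 3 * c1 * (norm (b - a))\<^sup>2" for a b
  proof -
    have "c1 * (norm b)\<^sup>2 \<le> c1 * (2 * (norm (b - a))\<^sup>2 + 2 * (norm a)\<^sup>2)"
      using c1 power2_norm_le_diff[of b a] by (rule mult_left_mono[rotated])
    moreover have "0 \<le> c1 * (norm (b - a))\<^sup>2"
      using c1 by simp
    ultimately show ?thesis
      using abs_triangle_ineq4[of "g b" "g a"] c[of a] c[of b]
      unfolding distrib_left mult.assoc by linarith
  qed
  show ?thesis
  proof (rule that[of "2 * c0" "3 * c1"])
    show "0 \<le> 2 * c0" "0 \<le> 3 * c1"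
      using c0 c1 by simp_all
    fix a b
    let ?w = "gibbs_density g a * isotropic_normal_density \<eta> (b - a)"
    have w: "0 \<le> ?w"
      using gibbs_density_pos[OF grad sc alpha, of a] isotropic_normal_density_nonneg[of \<eta> "b - a"] by simp
    have "\<bar>energy_increment g \<eta> a b\<bar> = ?w * \<bar>g b - g a\<bar>"
      using w by (simp add: energy_increment_def abs_mult[of ?w])
    also have "\<dots> \<le> ?w * (2 * c0 + 3 * c1 * (norm a)\<^sup>2 + 3 * c1 * (norm (b - a))\<^sup>2)"
      using w bound by (rule mult_left_mono[rotated])
    finally show "\<bar>energy_increment g \<eta> a b\<bar> \<le> ?w * (2 * c0 + 3 * c1 * (norm a)\<^sup>2 + 3 * c1 * (norm (b - a))\<^sup>2)" .
  qed
qed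

lemma integrable_energy_increment_fst: "integrable lborel (\<lambda>a. energy_increment g \<eta> a x)"
proof -
  obtain c0 c1 where c: "0 \<le> c0" "0 \<le> c1" and bound: "\<And>a b. \<bar>energy_increment g \<eta> a b\<bar>
    \<le> gibbs_density g a * isotropic_normal_density \<eta> (b - a) * (c0 + c1 * (norm a)\<^sup>2 + c1 * (norm (b - a))\<^sup>2)"
    using abs_energy_increment_le by metis
  let ?M = "1 / sqrt (2 * pi * \<eta>) ^ DIM('a)"
  show ?thesis
  proof (rule Bochner_Integration.integrable_bound)
    show "integrable lborel (\<lambda>a. gibbs_density g a * (?M * (c0 + 2 * c1 * (norm x)\<^sup>2) + 3 * ?M * c1 * (norm a)\<^sup>2))"
      by (rule integrable_gibbs_density_mult_quadratic[OF grad sc alpha])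
    show "AE a in lborel. norm (energy_increment g \<eta> a x)
        \<le> norm (gibbs_density g a * (?M * (c0 + 2 * c1 * (norm x)\<^sup>2) + 3 * ?M * c1 * (norm a)\<^sup>2))"
    proof (intro AE_I2)
      fix a :: 'a
      have "c1 * (norm (x - a))\<^sup>2 \<le> c1 * (2 * (norm x)\<^sup>2 + 2 * (norm a)\<^sup>2)"
        using power2_norm_le_diff[of "x - a" x] c(2) by (intro mult_left_mono) simp_all
      then have S: "c0 + c1 * (norm a)\<^sup>2 + c1 * (norm (x - a))\<^sup>2 \<le> (c0 + 2 * c1 * (norm x)\<^sup>2) + 3 * c1 * (norm a)\<^sup>2"
        by (simp add: algebra_simps)
      have "\<bar>energy_increment g \<eta> a x\<bar>
          \<le> gibbs_density g a * isotropic_normal_density \<eta> (x - a) * (c0 + c1 * (norm a)\<^sup>2 + c1 * (norm (x - a))\<^sup>2)"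
        by (rule bound)
      also have "\<dots> \<le> gibbs_density g a * ?M * ((c0 + 2 * c1 * (norm x)\<^sup>2) + 3 * c1 * (norm a)\<^sup>2)"
        using gibbs_density_pos[OF grad sc alpha, of a] isotropic_normal_density_le[OF eta, of "x - a"]
          isotropic_normal_density_nonneg[of \<eta> "x - a"] S c eta
        by (intro mult_mono) (auto intro: add_nonneg_nonneg)
      finally show "norm (energy_increment g \<eta> a x)
          \<le> norm (gibbs_density g a * (?M * (c0 + 2 * c1 * (norm x)\<^sup>2) + 3 * ?M * c1 * (norm a)\<^sup>2))"
        by (simp add: algebra_simps)
    qed
  qed (simp add: energy_increment_def)
qed

lemma integrable_energy_increment_snd: "integrable lborel (\<lambda>b. energy_increment g \<eta> a b)"
proof -
  obtain c0 c1 where "0 \<le> c0" "0 \<le> c1" and bound: "\<And>a b. \<bar>energy_increment g \<eta> a b\<bar>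
    \<le> gibbs_density g a * isotropic_normal_density \<eta> (b - a) * (c0 + c1 * (norm a)\<^sup>2 + c1 * (norm (b - a))\<^sup>2)"
    using abs_energy_increment_le by metis
  have "integrable lborel (\<lambda>b. gibbs_density g a *
          (isotropic_normal_density \<eta> (b - a) * ((c0 + c1 * (norm a)\<^sup>2) + c1 * (norm (b - a))\<^sup>2)))"
    using has_bochner_integral_isotropic_normal_density_shift_radial_quadratic[OF eta]
    by (intro integrable_mult_right integrable.intros)
  then show ?thesis
  proof (rule Bochner_Integration.integrable_bound)
    show "AE b in lborel. norm (energy_increment g \<eta> a b) \<le> norm (gibbs_density g a *
          (isotropic_normal_density \<eta> (b - a) * ((c0 + c1 * (norm a)\<^sup>2) + c1 * (norm (b - a))\<^sup>2)))"
      using bound[of a] by (intro AE_I2) (simp add: mult.assoc add.assoc order_trans[OF _ abs_ge_self])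
  qed (simp add: energy_increment_def)
qed

lemma integrable_energy_increment_pair:
  "integrable (lborel \<Otimes>\<^sub>M lborel) (\<lambda>(a, b). energy_increment g \<eta> a b)"
proof (rule lborel_pair.Fubini_integrable)
  obtain c0 c1 where c: "0 \<le> c0" "0 \<le> c1" and bound: "\<And>a b. \<bar>energy_increment g \<eta> a b\<bar>
    \<le> gibbs_density g a * isotropic_normal_density \<eta> (b - a) * (c0 + c1 * (norm a)\<^sup>2 + c1 * (norm (b - a))\<^sup>2)"
    using abs_energy_increment_le by metis
  show "integrable lborel (\<lambda>a. \<integral>b. norm ((\<lambda>(a, b). energy_increment g \<eta> a b) (a, b)) \<partial>lborel)"
  proof (rule Bochner_Integration.integrable_bound)
    show "integrable lborel (\<lambda>a. gibbs_density g a * ((c0 + c1 * (real DIM('a) * \<eta>)) + c1 * (norm a)\<^sup>2))"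
      by (rule integrable_gibbs_density_mult_quadratic[OF grad sc alpha])
    show "AE a in lborel. norm (\<integral>b. norm ((\<lambda>(a, b). energy_increment g \<eta> a b) (a, b)) \<partial>lborel)
        \<le> norm (gibbs_density g a * ((c0 + c1 * (real DIM('a) * \<eta>)) + c1 * (norm a)\<^sup>2))"
    proof (intro AE_I2)
      fix a :: 'a
      let ?D = "\<lambda>b. gibbs_density g a *
        (isotropic_normal_density \<eta> (b - a) * ((c0 + c1 * (norm a)\<^sup>2) + c1 * (norm (b - a))\<^sup>2))"
      have D: "has_bochner_integral lborel ?D (gibbs_density g a * ((c0 + c1 * (norm a)\<^sup>2) + c1 * (real DIM('a) * \<eta>)))"
        using has_bochner_integral_isotropic_normal_density_shift_radial_quadratic[OF eta]
        by (rule has_bochner_integral_mult_right)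
      have "(\<integral>b. \<bar>energy_increment g \<eta> a b\<bar> \<partial>lborel) \<le> integral\<^sup>L lborel ?D"
        using integrable_energy_increment_snd[of a] integrable.intros[OF D] bound[of a]
        by (intro integral_mono) (auto simp: mult.assoc add.assoc)
      also have "\<dots> = gibbs_density g a * ((c0 + c1 * (real DIM('a) * \<eta>)) + c1 * (norm a)\<^sup>2)"
        using has_bochner_integral_integral_eq[OF D] by (simp add: algebra_simps)
      finally show "norm (\<integral>b. norm ((\<lambda>(a, b). energy_increment g \<eta> a b) (a, b)) \<partial>lborel)
          \<le> norm (gibbs_density g a * ((c0 + c1 * (real DIM('a) * \<eta>)) + c1 * (norm a)\<^sup>2))"
        by simp
    qed
  qed (simp add: energy_increment_def)
  show "AE a in lborel. integrable lborel (\<lambda>b. (\<lambda>(a, b). energy_increment g \<eta> a b) (a, b))"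
    using integrable_energy_increment_snd by simp
qed (simp add: energy_increment_def)

lemma integral_energy_increment_le:
  "(\<integral>b. energy_increment g \<eta> a b \<partial>lborel) \<le> gibbs_density g a * (\<beta> / 2 * (real DIM('a) * \<eta>))"
proof -
  let ?u = "\<lambda>b. gibbs_density g a *
    (isotropic_normal_density \<eta> (b - a) * (0 + grad a \<bullet> (b - a) + \<beta> / 2 * (norm (b - a))\<^sup>2))"
  have u: "has_bochner_integral lborel ?u (gibbs_density g a * (0 + \<beta> / 2 * (real DIM('a) * \<eta>)))"
    using has_bochner_integral_isotropic_normal_density_shift_quadratic[OF eta]
    by (rule has_bochner_integral_mult_right)
  have "energy_increment g \<eta> a b \<le> ?u b" for b
  proof -
    have "g b - g a \<le> grad a \<bullet> (b - a) + \<beta> / 2 * (norm (b - a))\<^sup>2"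
      using sm unfolding beta_smooth_def by blast
    moreover have "0 \<le> gibbs_density g a * isotropic_normal_density \<eta> (b - a)"
      using gibbs_density_pos[OF grad sc alpha, of a] isotropic_normal_density_nonneg[of \<eta> "b - a"] by simp
    ultimately show ?thesis
      unfolding energy_increment_def by (simp add: mult_left_mono flip: mult.assoc)
  qed
  then have "(\<integral>b. energy_increment g \<eta> a b \<partial>lborel) \<le> integral\<^sup>L lborel ?u"
    using integrable_energy_increment_snd integrable.intros[OF u] by (intro integral_mono)
  also have "\<dots> = gibbs_density g a * (0 + \<beta> / 2 * (real DIM('a) * \<eta>))"
    by (rule has_bochner_integral_integral_eq[OF u])
  finally show ?thesis
    by simp
qed

lemma integral_integral_energy_increment_le:
  "(\<integral>x. (\<integral>a. energy_increment g \<eta> a x \<partial>lborel) \<partial>lborel) \<le> \<beta> / 2 * (real DIM('a) * \<eta>)"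
proof -
  have "(\<integral>x. (\<integral>a. energy_increment g \<eta> a x \<partial>lborel) \<partial>lborel)
      = (\<integral>a. (\<integral>b. energy_increment g \<eta> a b \<partial>lborel) \<partial>lborel)"
    using lborel_pair.integral_snd[where f = "energy_increment g \<eta>"]
      lborel_pair.integral_fst[where f = "energy_increment g \<eta>"] integrable_energy_increment_pair
    by simp
  also have "\<dots> \<le> (\<integral>a. gibbs_density g a * (\<beta> / 2 * (real DIM('a) * \<eta>)) \<partial>lborel)"
    using lborel_pair.integrable_fst[where f = "energy_increment g \<eta>"] integrable_energy_increment_pair
      integrable_gibbs_density_mult_quadratic[OF grad sc alpha, of "\<beta> / 2 * (real DIM('a) * \<eta>)" 0]
    by (intro integral_mono integral_energy_increment_le) simp_all
  also have "\<dots> = \<beta> / 2 * (real DIM('a) * \<eta>)"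
    using has_bochner_integral_integral_eq[OF has_bochner_integral_gibbs_density[OF grad sc alpha]] by simp
  finally show ?thesis .
qed

lemma
  defines "p \<equiv> gaussian_smoothing (gibbs_density g) \<eta>"
  shows integrable_KL_integrand_gibbs_smoothing:
      "integrable lborel (\<lambda>x. p x * ln (p x / gibbs_density g x))"
    and KL_dens_gibbs_smoothing_le: "KL_dens p (gibbs_density g) \<le> \<beta> / 2 * (real DIM('a) * \<eta>)"
proof -
  let ?q = "gibbs_density g"
  let ?h = "\<lambda>x. \<integral>a. energy_increment g \<eta> a x \<partial>lborel"
  note q = has_bochner_integral_gibbs_density[OF grad sc alpha] gibbs_density_pos[OF grad sc alpha]
  note p = has_bochner_integral_gaussian_smoothing[OF q eta, folded p_def]
    gaussian_smoothing_pos[OF q eta, folded p_def]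
  have upper: "p x * ln (p x / ?q x) \<le> ?h x" for x
  proof -
    have "energy_increment g \<eta> a x = ?q a * isotropic_normal_density \<eta> (x - a) * ln (?q a / ?q x)" for a
      by (simp add: energy_increment_def ln_gibbs_density_ratio[OF grad sc alpha])
    then show ?thesis
      using gaussian_smoothing_mult_ln_le[OF q eta, of x] integrable_energy_increment_fst[of x]
      by (simp add: p_def)
  qed
  have lower: "p x - ?q x \<le> p x * ln (p x / ?q x)" for x
    using power2_sqrt_diff_le_mult_ln[OF p(2) q(2), of x x] zero_le_power2[of "sqrt (p x) - sqrt (?q x)"]
    by linarith
  have h: "integrable lborel ?h"
    by (rule lborel_pair.integrable_snd[where f = "energy_increment g \<eta>"])
      (use integrable_energy_increment_pair in simp)
  show int: "integrable lborel (\<lambda>x. p x * ln (p x / ?q x))"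
  proof (rule Bochner_Integration.integrable_bound)
    show "integrable lborel (\<lambda>x. \<bar>p x - ?q x\<bar> + \<bar>?h x\<bar>)"
      using integrable.intros[OF p(1)] integrable.intros[OF q(1)] h
      by (intro Bochner_Integration.integrable_add integrable_abs Bochner_Integration.integrable_diff)
    show "AE x in lborel. norm (p x * ln (p x / ?q x)) \<le> norm (\<bar>p x - ?q x\<bar> + \<bar>?h x\<bar>)"
    proof (intro AE_I2)
      fix x
      show "norm (p x * ln (p x / ?q x)) \<le> norm (\<bar>p x - ?q x\<bar> + \<bar>?h x\<bar>)"
        using lower[of x] upper[of x] abs_ge_self[of "?h x"] abs_ge_minus_self[of "p x - ?q x"]
        unfolding real_norm_def abs_le_iff by (intro conjI) linarith+
    qed
    show "(\<lambda>x. p x * ln (p x / ?q x)) \<in> borel_measurable lborel"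
      using borel_measurable_integrable[OF integrable.intros[OF p(1)]] by measurable
  qed
  have "KL_dens p ?q \<le> integral\<^sup>L lborel ?h"
    unfolding KL_dens_def using int h upper by (rule integral_mono)
  also have "\<dots> \<le> \<beta> / 2 * (real DIM('a) * \<eta>)"
    by (rule integral_integral_energy_increment_le)
  finally show "KL_dens p ?q \<le> \<beta> / 2 * (real DIM('a) * \<eta>)" .
qed

end

lemma smoothing_bound_le_exp_bound:
  fixes d :: real
  assumes "0 \<le> d" "0 < \<alpha>" "0 < \<beta>"
  shows "\<beta> / 2 * (d * \<eta>) \<le> d * \<alpha> / (4 * \<beta>) * (exp (2 * \<beta>\<^sup>2 * \<eta> / \<alpha>) - 1)"
proof -
  have "\<beta> / 2 * (d * \<eta>) = d * \<alpha> / (4 * \<beta>) * (2 * \<beta>\<^sup>2 * \<eta> / \<alpha>)"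
    using assms by (simp add: field_simps power2_eq_square)
  also have "\<dots> \<le> d * \<alpha> / (4 * \<beta>) * (exp (2 * \<beta>\<^sup>2 * \<eta> / \<alpha>) - 1)"
  proof (rule mult_left_mono)
    show "2 * \<beta>\<^sup>2 * \<eta> / \<alpha> \<le> exp (2 * \<beta>\<^sup>2 * \<eta> / \<alpha>) - 1"
      using exp_ge_add_one_self[of "2 * \<beta>\<^sup>2 * \<eta> / \<alpha>"] by linarith
  qed (use assms in simp)
  finally show ?thesis .
qed

theorem mainTheorem10:
  fixes g :: "'a::euclidean_space \<Rightarrow> real" and grad :: "'a \<Rightarrow> 'a"
    and \<alpha> \<beta> \<eta> :: real
  assumes grad: "\<And>x. GDERIV g x :> grad x"
    and twice: "\<And>x. grad differentiable (at x)"
    and alpha_pos: "0 < \<alpha>"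
    and sc: "strongly_convex g grad \<alpha>"
    and sm: "beta_smooth g grad \<beta>"
    and eta_pos: "0 < \<eta>"
  shows "integrable lborel
           (\<lambda>x. X_marginal_density g \<eta> x * ln (X_marginal_density g \<eta> x / gibbs_density g x))
       \<and> KL_dens (X_marginal_density g \<eta>) (gibbs_density g)
           \<le> real DIM('a) * \<alpha> / (2 * \<beta>) * (exp (2 * \<beta>\<^sup>2 * \<eta> / \<alpha>) - 1)
       \<and> TV_dens (X_marginal_density g \<eta>) (gibbs_density g)
           \<le> sqrt (real DIM('a) * \<alpha> / (4 * \<beta>) * (exp (2 * \<beta>\<^sup>2 * \<eta> / \<alpha>) - 1))"
proof -
  let ?B = "real DIM('a) * \<alpha> / (4 * \<beta>) * (exp (2 * \<beta>\<^sup>2 * \<eta> / \<alpha>) - 1)"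
  have beta: "0 < \<beta>"
    using strongly_convex_le_beta_smooth[OF sc sm] alpha_pos by linarith
  note q = has_bochner_integral_gibbs_density[OF grad sc alpha_pos] gibbs_density_pos[OF grad sc alpha_pos]
  note p = has_bochner_integral_gaussian_smoothing[OF q eta_pos] gaussian_smoothing_pos[OF q eta_pos]
  note X = X_marginal_density_eq_gaussian_smoothing[OF grad sc alpha_pos eta_pos]
  note int = integrable_KL_integrand_gibbs_smoothing[OF grad sc alpha_pos sm eta_pos]
  have KL: "KL_dens (X_marginal_density g \<eta>) (gibbs_density g) \<le> ?B"
    unfolding X using KL_dens_gibbs_smoothing_le[OF grad sc alpha_pos sm eta_pos]
      smoothing_bound_le_exp_bound[of "real DIM('a)" \<alpha> \<beta> \<eta>] alpha_pos beta
    by linarith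
  moreover have "?B \<le> real DIM('a) * \<alpha> / (2 * \<beta>) * (exp (2 * \<beta>\<^sup>2 * \<eta> / \<alpha>) - 1)"
    using alpha_pos beta eta_pos by (simp add: field_simps)
  moreover have "TV_dens (X_marginal_density g \<eta>) (gibbs_density g) \<le> sqrt ?B"
    using TV_dens_le_sqrt_KL_dens[OF p q int] KL unfolding X
    by (meson order_trans real_sqrt_le_mono)
  ultimately show ?thesis
    using int unfolding X by linarith
qed

end
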